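(* Let $(p_n)_{n\ge1}$ be the strictly increasing enumeration of all primes and let $S=\big\langle \frac{p_n+1}{p_n^2}: n\in\mathbb N\big\rangle\subseteq\mathbb Q_{\ge0}$. Then $\mathcal A(S)=\{\frac{p_n+1}{p_n^2}: n\in\mathbb N\}$, every element of $S$ is divisible in $S$ by only finitely many atoms, and $S$ is an FFM.
   Context: Monoids are commutative, cancellative, with identity, written additively; $a\mid_S b$ means $b-a\in S$. $\mathcal A(S)$ is the set of atoms. An FFM is a monoid in which every element is a finite sum of atoms and has only finitely many factorizations (up to order). *)

theory Defs
  imports Complex_Main "HOL-Computational_Algebra.Primes" "HOL-Library.Multiset"
begin

inductive_set mon_gen :: "rat set \<Rightarrow> rat set" for G :: "rat set" where
  zero: "0 \<in> mon_gen G"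
| add_gen: "g \<in> G \<Longrightarrow> x \<in> mon_gen G \<Longrightarrow> g + x \<in> mon_gen G"

definition mon_units :: "rat set \<Rightarrow> rat set" where
  "mon_units M = {u \<in> M. - u \<in> M}"

definition mon_dvd :: "rat set \<Rightarrow> rat \<Rightarrow> rat \<Rightarrow> bool" where
  "mon_dvd M a b \<longleftrightarrow> b - a \<in> M"

definition atoms :: "rat set \<Rightarrow> rat set" where
  "atoms M = {a \<in> M. a \<notin> mon_units M \<and>
      (\<forall>b\<in>M. \<forall>c\<in>M. a = b + c \<longrightarrow> b \<in> mon_units M \<or> c \<in> mon_units M)}"

definition factorizations :: "rat set \<Rightarrow> rat \<Rightarrow> rat multiset set" where
  "factorizations M x = {m. set_mset m \<subseteq> atoms M \<and> sum_mset m = x}"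

definition FFM :: "rat set \<Rightarrow> bool" where
  "FFM M \<longleftrightarrow> (\<forall>x\<in>M. factorizations M x \<noteq> {} \<and> finite (factorizations M x))"

definition prime_gens :: "rat set" where
  "prime_gens = {of_nat (p + 1) / of_nat (p ^ 2) | p :: nat. prime p}"

end

theory Submission
  imports Defs
begin

(* Every element of S is a finite sum of the positive generators g p = (p + 1) / p^2,
   so S is reduced and its atoms are among the generators. The generators are separated
   p-adically: g q has denominator prime to p for q \<noteq> p, whereas k * g p has such a
   denominator only if p^2 divides k. Hence g p is not a sum of other generators, so
   every generator is an atom. If g p divides x but does not occur in a fixed
   factorization of x, then adding g p to a factorization of x - g p gives a
   factorization of x with denominator prime to p, which must use g p at least p^2
   times; so x \<ge> p^2 * g p = p + 1. Thus each x is divisible by finitely many atoms,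
   and the least of them bounds the length of the factorizations of x. *)

lemma sum_mset_in_mon_gen: "set_mset m \<subseteq> G \<Longrightarrow> sum_mset m \<in> mon_gen G"
  by (induction m) (auto intro: mon_gen.intros)

lemma mon_gen_iff_sum_mset: "x \<in> mon_gen G \<longleftrightarrow> (\<exists>m. set_mset m \<subseteq> G \<and> x = sum_mset m)"
proof
  assume "x \<in> mon_gen G"
  then show "\<exists>m. set_mset m \<subseteq> G \<and> x = sum_mset m"
  proof (induction rule: mon_gen.induct)
    case zero
    show ?case by (intro exI[of _ "{#}"]) simp
  next
    case (add_gen g x)
    then obtain m where "set_mset m \<subseteq> G" "x = sum_mset m" by blast
    with add_gen.hyps(1) show ?case by (intro exI[of _ "add_mset g m"]) simp
  qed
qed (auto intro: sum_mset_in_mon_gen)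

lemma sum_mset_nonneg:
  fixes m :: "'a::ordered_comm_monoid_add multiset"
  shows "set_mset m \<subseteq> {0..} \<Longrightarrow> 0 \<le> sum_mset m"
  by (induction m) auto

lemma sum_mset_pos:
  fixes m :: "'a::ordered_cancel_comm_monoid_add multiset"
  assumes "set_mset m \<subseteq> {0<..}" and "m \<noteq> {#}"
  shows "0 < sum_mset m"
proof -
  obtain a m' where m: "m = add_mset a m'" using assms(2) by (cases m) auto
  have "0 \<le> sum_mset m'" using assms(1) m by (intro sum_mset_nonneg) auto
  with assms(1) m show ?thesis by (auto intro: add_pos_nonneg)
qed

lemma sum_mset_split_count:
  fixes m :: "'a::comm_semiring_1 multiset"
  shows "sum_mset m = of_nat (count m a) * a + sum_mset {#b \<in># m. b \<noteq> a#}"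
proof -
  have "sum_mset m = sum_mset ({#b \<in># m. b = a#} + {#b \<in># m. b \<noteq> a#})"
    by (subst multiset_partition[of m "\<lambda>b. b = a"]) simp
  then show ?thesis by (simp add: filter_eq_replicate_mset)
qed

lemma count_mult_le_sum_mset:
  fixes m :: "'a::{comm_semiring_1, ordered_comm_monoid_add} multiset"
  assumes "set_mset m \<subseteq> {0..}"
  shows "of_nat (count m a) * a \<le> sum_mset m"
proof -
  have "0 \<le> sum_mset {#b \<in># m. b \<noteq> a#}" using assms by (intro sum_mset_nonneg) auto
  then show ?thesis by (subst sum_mset_split_count[of m a]) (simp add: add_increasing2)
qed

lemma size_mult_le_sum_mset:
  fixes m :: "'a::{ordered_semiring, semiring_1} multiset"
  shows "(\<And>a. a \<in># m \<Longrightarrow> e \<le> a) \<Longrightarrow> of_nat (size m) * e \<le> sum_mset m"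
  by (induction m) (auto simp: algebra_simps add_mono)

lemma finite_multisets_size_le:
  assumes "finite A"
  shows "finite {m. set_mset m \<subseteq> A \<and> size m \<le> n}"
proof -
  have "{m. set_mset m \<subseteq> A \<and> size m \<le> n} = (\<Union>k\<le>n. multisets_of_size A k)"
    by (auto simp: multisets_of_size_def)
  then show ?thesis using assms by auto
qed

lemma mon_gen_nonneg:
  assumes "G \<subseteq> {0..}" and "x \<in> mon_gen G"
  shows "0 \<le> x"
  using assms(2) by induction (use assms(1) in auto)

lemma mon_units_mon_gen:
  assumes "G \<subseteq> {0..}"
  shows "mon_units (mon_gen G) = {0}"
proof -
  have "u = 0" if "u \<in> mon_gen G" "- u \<in> mon_gen G" for u
    using mon_gen_nonneg[OF assms that(1)] mon_gen_nonneg[OF assms that(2)] by simp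
  then show ?thesis unfolding mon_units_def by (auto intro: mon_gen.zero)
qed

lemma atoms_mon_gen_subset:
  assumes pos: "G \<subseteq> {0<..}"
  shows "atoms (mon_gen G) \<subseteq> G"
proof
  fix a assume atom: "a \<in> atoms (mon_gen G)"
  have units: "mon_units (mon_gen G) = {0}" using pos by (intro mon_units_mon_gen) auto
  obtain m where m: "set_mset m \<subseteq> G" "a = sum_mset m"
    using atom unfolding atoms_def mon_gen_iff_sum_mset by blast
  have "m \<noteq> {#}" using atom m units unfolding atoms_def by auto
  then obtain b m' where bm': "m = add_mset b m'" by (cases m) auto
  have "b \<in> mon_gen G" "sum_mset m' \<in> mon_gen G" "a = b + sum_mset m'"
    using m bm' sum_mset_in_mon_gen[of "{#b#}" G] sum_mset_in_mon_gen[of m' G] by auto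
  then have "b = 0 \<or> sum_mset m' = 0" using atom units unfolding atoms_def by blast
  moreover have "0 < b" using pos m bm' by auto
  ultimately show "a \<in> G" using \<open>a = b + sum_mset m'\<close> m bm' by auto
qed

lemma generator_in_atoms_mon_gen:
  assumes pos: "G \<subseteq> {0<..}" and "a \<in> G"
    and occurs: "\<And>m. set_mset m \<subseteq> G \<Longrightarrow> sum_mset m = a \<Longrightarrow> a \<in># m"
  shows "a \<in> atoms (mon_gen G)"
proof -
  have units: "mon_units (mon_gen G) = {0}" using pos by (intro mon_units_mon_gen) auto
  have trivial: "m = {#a#}" if m: "set_mset m \<subseteq> G" "sum_mset m = a" for m
  proof -
    obtain m' where m': "m = add_mset a m'" using occurs[OF m] by (metis multi_member_split)
    then have "sum_mset m' = 0" using m by simp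
    moreover have "set_mset m' \<subseteq> {0<..}" using pos m m' by auto
    ultimately have "m' = {#}" using sum_mset_pos[of m'] by fastforce
    then show ?thesis using m' by simp
  qed
  have "b = 0 \<or> c = 0" if bc: "b \<in> mon_gen G" "c \<in> mon_gen G" "a = b + c" for b c
  proof -
    obtain mb mc where "set_mset mb \<subseteq> G" "b = sum_mset mb" "set_mset mc \<subseteq> G" "c = sum_mset mc"
      using bc(1,2) unfolding mon_gen_iff_sum_mset by blast
    then have "mb + mc = {#a#}" using bc(3) by (intro trivial) auto
    then show ?thesis using \<open>b = sum_mset mb\<close> \<open>c = sum_mset mc\<close> by (auto simp: union_is_single)
  qed
  moreover have "a \<in> mon_gen G" using \<open>a \<in> G\<close> sum_mset_in_mon_gen[of "{#a#}"] by simp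
  moreover have "a \<noteq> 0" using pos \<open>a \<in> G\<close> by auto
  ultimately show ?thesis unfolding atoms_def units by auto
qed

lemma mon_dvd_sum_mset:
  assumes "set_mset m \<subseteq> G" and "a \<in># m"
  shows "mon_dvd (mon_gen G) a (sum_mset m)"
proof -
  obtain m' where m': "m = add_mset a m'" using assms(2) by (metis multi_member_split)
  then have "sum_mset m - a = sum_mset m'" by simp
  then show ?thesis using assms(1) m' unfolding mon_dvd_def by (auto intro: sum_mset_in_mon_gen)
qed

lemma FFM_mon_gen:
  assumes pos: "G \<subseteq> {0<..}" and atoms: "atoms (mon_gen G) = G"
    and finite_dvd: "\<And>x. x \<in> mon_gen G \<Longrightarrow> finite {a \<in> atoms (mon_gen G). mon_dvd (mon_gen G) a x}"
  shows "FFM (mon_gen G)"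
  unfolding FFM_def
proof (intro ballI conjI)
  fix x assume x: "x \<in> mon_gen G"
  then show "factorizations (mon_gen G) x \<noteq> {}"
    unfolding factorizations_def atoms mon_gen_iff_sum_mset by auto
  define A where "A = {a \<in> G. mon_dvd (mon_gen G) a x}"
  have "finite A" using finite_dvd[OF x] atoms by (simp add: A_def)
  \<comment> \<open>inserting 1 keeps the minimum meaningful when no atom divides x\<close>
  define e where "e = Min (insert 1 A)"
  have "0 < e" using \<open>finite A\<close> pos by (auto simp: e_def A_def)
  have "set_mset m \<subseteq> A \<and> size m \<le> nat \<lceil>x / e\<rceil>" if "m \<in> factorizations (mon_gen G) x" for m
  proof
    have m: "set_mset m \<subseteq> G" "sum_mset m = x"
      using that unfolding factorizations_def atoms by auto
    then show "set_mset m \<subseteq> A" by (auto simp: A_def intro: mon_dvd_sum_mset)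
    then have "e \<le> a" if "a \<in># m" for a
      using that \<open>finite A\<close> by (auto simp: e_def)
    then have "of_nat (size m) * e \<le> x" using m(2) size_mult_le_sum_mset by blast
    then have "of_nat (size m) \<le> x / e" using \<open>0 < e\<close> by (simp add: field_simps)
    then show "size m \<le> nat \<lceil>x / e\<rceil>" by linarith
  qed
  then have "factorizations (mon_gen G) x \<subseteq> {m. set_mset m \<subseteq> A \<and> size m \<le> nat \<lceil>x / e\<rceil>}"
    by blast
  then show "finite (factorizations (mon_gen G) x)"
    using finite_multisets_size_le[OF \<open>finite A\<close>] by (rule finite_subset)
qed

definition prime_gen :: "nat \<Rightarrow> rat" where
  "prime_gen p = of_nat (p + 1) / of_nat (p ^ 2)"

lemma prime_gens_eq_image: "prime_gens = prime_gen ` {p. prime p}"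
  unfolding prime_gens_def prime_gen_def by auto

lemma prime_gen_pos: "prime p \<Longrightarrow> 0 < prime_gen p"
  unfolding prime_gen_def using prime_gt_0_nat by simp

lemma prime_gens_pos: "prime_gens \<subseteq> {0<..}"
  unfolding prime_gens_eq_image using prime_gen_pos by auto

lemma of_nat_square_mult_prime_gen: "0 < p \<Longrightarrow> of_nat (p ^ 2) * prime_gen p = of_nat (p + 1)"
  unfolding prime_gen_def by simp

definition p_integral :: "nat \<Rightarrow> rat \<Rightarrow> bool" where
  "p_integral p x \<longleftrightarrow> (\<exists>N D. 0 < D \<and> \<not> p dvd D \<and> x = of_int N / of_nat D)"

lemma p_integral_0: "prime p \<Longrightarrow> p_integral p 0"
  unfolding p_integral_def by (intro exI[of _ 0] exI[of _ 1]) auto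

lemma p_integral_add_diff:
  assumes "prime p" and "p_integral p x" and "p_integral p y"
  shows "p_integral p (x + y)" and "p_integral p (x - y)"
proof -
  obtain N D where ND: "0 < D" "\<not> p dvd D" "x = of_int N / of_nat D"
    using assms(2) unfolding p_integral_def by blast
  obtain N' D' where ND': "0 < D'" "\<not> p dvd D'" "y = of_int N' / of_nat D'"
    using assms(3) unfolding p_integral_def by blast
  have denom: "0 < D * D'" "\<not> p dvd D * D'"
    using ND ND' assms(1) by (auto simp: prime_dvd_mult_nat)
  have "x + y = of_int (N * D' + N' * D) / of_nat (D * D')"
    unfolding ND(3) ND'(3) using ND(1) ND'(1) by (simp add: field_simps)
  with denom show "p_integral p (x + y)" unfolding p_integral_def by blast
  have "x - y = of_int (N * D' - N' * D) / of_nat (D * D')"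
    unfolding ND(3) ND'(3) using ND(1) ND'(1) by (simp add: field_simps)
  with denom show "p_integral p (x - y)" unfolding p_integral_def by blast
qed

lemma p_integral_sum_mset:
  "prime p \<Longrightarrow> (\<And>x. x \<in># m \<Longrightarrow> p_integral p x) \<Longrightarrow> p_integral p (sum_mset m)"
  by (induction m) (auto intro: p_integral_0 p_integral_add_diff)

lemma p_integral_prime_gen:
  assumes "prime p" "prime q" "q \<noteq> p"
  shows "p_integral p (prime_gen q)"
proof -
  have "\<not> p dvd q ^ 2"
    using assms primes_dvd_imp_eq prime_dvd_power_nat by blast
  moreover have "0 < q ^ 2" using assms(2) prime_gt_0_nat by simp
  ultimately show ?thesis
    unfolding p_integral_def prime_gen_def by (intro exI[of _ "int (q + 1)"] exI[of _ "q ^ 2"]) simp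
qed

lemma square_dvd_if_p_integral_mult_prime_gen:
  assumes p: "prime p" and "p_integral p (of_nat k * prime_gen p)"
  shows "p ^ 2 dvd k"
proof -
  obtain N D where ND: "0 < D" "\<not> p dvd D" "of_nat k * prime_gen p = of_int N / of_nat D"
    using assms(2) unfolding p_integral_def by blast
  have "0 < p" using p prime_gt_0_nat by simp
  then have "(of_nat (k * ((p + 1) * D)) :: rat) = of_int (int (p ^ 2) * N)"
    using ND(1,3) by (simp add: prime_gen_def field_simps)
  then have "int (k * ((p + 1) * D)) = int (p ^ 2) * N"
    by (metis of_int_eq_iff of_int_of_nat_eq)
  then have "p ^ 2 dvd k * ((p + 1) * D)"
    by (metis dvd_triv_left int_dvd_int_iff)
  moreover have "\<not> p dvd p + 1"
    using p by (metis dvd_add_right_iff dvd_refl nat_dvd_1_iff_1 not_prime_1)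
  then have "\<not> p dvd (p + 1) * D" using p ND(2) prime_dvd_mult_nat by blast
  then have "coprime (p ^ 2) ((p + 1) * D)" using p prime_imp_coprime_nat by simp
  ultimately show ?thesis by (simp add: coprime_dvd_mult_left_iff)
qed

lemma p_integral_sum_prime_gens:
  assumes p: "prime p" and m: "set_mset m \<subseteq> prime_gens" and "prime_gen p \<notin># m"
  shows "p_integral p (sum_mset m)"
proof (rule p_integral_sum_mset[OF p])
  fix a assume "a \<in># m"
  then obtain q where "prime q" "a = prime_gen q" using m unfolding prime_gens_eq_image by auto
  moreover have "q \<noteq> p" using \<open>a \<in># m\<close> \<open>a = prime_gen q\<close> \<open>prime_gen p \<notin># m\<close> by auto
  ultimately show "p_integral p a" using p p_integral_prime_gen by simp
qed

lemma square_dvd_count_if_p_integral: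
  assumes p: "prime p" and m: "set_mset m \<subseteq> prime_gens" and "p_integral p (sum_mset m)"
  shows "p ^ 2 dvd count m (prime_gen p)"
proof -
  let ?rest = "{#a \<in># m. a \<noteq> prime_gen p#}"
  have "p_integral p (sum_mset ?rest)" using m by (intro p_integral_sum_prime_gens[OF p]) auto
  then have "p_integral p (sum_mset m - sum_mset ?rest)"
    using p_integral_add_diff(2)[OF p] \<open>p_integral p (sum_mset m)\<close> by blast
  then have "p_integral p (of_nat (count m (prime_gen p)) * prime_gen p)"
    by (subst (asm) sum_mset_split_count[of m "prime_gen p"]) simp
  then show ?thesis using square_dvd_if_p_integral_mult_prime_gen[OF p] by blast
qed

lemma atoms_prime_gens: "atoms (mon_gen prime_gens) = prime_gens"
proof
  show "atoms (mon_gen prime_gens) \<subseteq> prime_gens"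
    using prime_gens_pos by (rule atoms_mon_gen_subset)
  show "prime_gens \<subseteq> atoms (mon_gen prime_gens)"
  proof
    fix a assume "a \<in> prime_gens"
    then obtain p where p: "prime p" "a = prime_gen p" unfolding prime_gens_eq_image by auto
    have "\<not> p ^ 2 dvd 1" using p(1) not_prime_1 by auto
    then have "\<not> p_integral p a"
      using p square_dvd_if_p_integral_mult_prime_gen[of p 1] by auto
    then have "a \<in># m" if "set_mset m \<subseteq> prime_gens" "sum_mset m = a" for m
      using that p(1) p_integral_sum_prime_gens[of p m] p(2) by auto
    then show "a \<in> atoms (mon_gen prime_gens)"
      using generator_in_atoms_mon_gen[OF prime_gens_pos \<open>a \<in> prime_gens\<close>] by blast
  qed
qed

lemma mon_dvd_prime_gen_imp_less:
  assumes p: "prime p" and m: "set_mset m \<subseteq> prime_gens" and "prime_gen p \<notin># m"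
    and dvd: "mon_dvd (mon_gen prime_gens) (prime_gen p) (sum_mset m)"
  shows "of_nat p < sum_mset m"
proof -
  obtain m' where m': "set_mset m' \<subseteq> prime_gens" "sum_mset m - prime_gen p = sum_mset m'"
    using dvd unfolding mon_dvd_def mon_gen_iff_sum_mset by blast
  define n where "n = add_mset (prime_gen p) m'"
  have n: "set_mset n \<subseteq> prime_gens" "sum_mset n = sum_mset m"
    using m' p unfolding n_def prime_gens_eq_image by auto
  have "p_integral p (sum_mset n)"
    using n(2) p_integral_sum_prime_gens[OF p m \<open>prime_gen p \<notin># m\<close>] by simp
  then have "p ^ 2 dvd count n (prime_gen p)" using square_dvd_count_if_p_integral[OF p n(1)] by blast
  then have "p ^ 2 \<le> count n (prime_gen p)" by (simp add: n_def dvd_imp_le)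
  then have "of_nat (p ^ 2) * prime_gen p \<le> of_nat (count n (prime_gen p)) * prime_gen p"
    using prime_gen_pos[OF p] by (intro mult_right_mono) auto
  also have "\<dots> \<le> sum_mset n"
    using n(1) prime_gens_pos by (intro count_mult_le_sum_mset) auto
  finally have "of_nat (p + 1) \<le> sum_mset m"
    using n(2) of_nat_square_mult_prime_gen[of p] p prime_gt_0_nat by simp
  then show ?thesis by simp
qed

lemma finite_atoms_dvd_prime_gens:
  assumes "x \<in> mon_gen prime_gens"
  shows "finite {a \<in> atoms (mon_gen prime_gens). mon_dvd (mon_gen prime_gens) a x}"
proof -
  obtain m where m: "set_mset m \<subseteq> prime_gens" "x = sum_mset m"
    using assms unfolding mon_gen_iff_sum_mset by blast
  have "{a \<in> atoms (mon_gen prime_gens). mon_dvd (mon_gen prime_gens) a x}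
      \<subseteq> set_mset m \<union> prime_gen ` {..nat \<lceil>x\<rceil>}"
  proof
    fix a assume "a \<in> {a \<in> atoms (mon_gen prime_gens). mon_dvd (mon_gen prime_gens) a x}"
    then have "a \<in> prime_gens" and dvd: "mon_dvd (mon_gen prime_gens) a x"
      by (simp_all add: atoms_prime_gens)
    then obtain p where p: "prime p" "a = prime_gen p" unfolding prime_gens_eq_image by auto
    have "p \<le> nat \<lceil>x\<rceil>" if "a \<notin># m"
    proof -
      have "of_nat p < x" using mon_dvd_prime_gen_imp_less[OF p(1) m(1)] that dvd p(2) m(2) by simp
      then show ?thesis by linarith
    qed
    then show "a \<in> set_mset m \<union> prime_gen ` {..nat \<lceil>x\<rceil>}" using p(2) by auto
  qed
  then show ?thesis by (rule finite_subset) simp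
qed

theorem mainTheorem9:
  shows "atoms (mon_gen prime_gens) = prime_gens
    \<and> (\<forall>x\<in>mon_gen prime_gens. finite {a \<in> atoms (mon_gen prime_gens). mon_dvd (mon_gen prime_gens) a x})
    \<and> FFM (mon_gen prime_gens)"
  using atoms_prime_gens finite_atoms_dvd_prime_gens
    FFM_mon_gen[OF prime_gens_pos atoms_prime_gens finite_atoms_dvd_prime_gens] by blast

end
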